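(* Let $x\in\mathbb X$, $B\Subset\mathbb X\setminus\{x\}$ and $Y\in\mathbf F(x)$ with $Y\cap B=\varnothing$. Then \[ \max\Big\{|W(Y\mid B)|,\ 1+|W(Y\mid B)-1|\alpha^S\ \Big|\ \varnothing\neq S\subset Y\setminus\{x\}\Big\} \le\prod_{\substack{X\in\mathbf F(x):\\ X\setminus B=Y}}\max\Big\{|W(X)|,\ 1+|W(X)-1|\alpha^S\ \Big|\ \varnothing\neq S\subset X\setminus(\{x\}\cup B)\Big\}. \]
   Context: $\mathbb X$ is a finite or countably infinite set; $X\Subset\mathbb X$ means finite subset; $\mathbf F$ is the set of finite subsets of $\mathbb X$ and $\mathbf F(x)=\{X\Subset\mathbb X\mid x\in X\}$. Fix $W:\mathbf F\to\mathbb C$, $r:\mathbb X\to[0,1)$, $\alpha=\frac r{1-r}$, and write $\alpha^S=\prod_{s\in S}\alpha(s)$. The conditional interaction is $W(X\mid B)=\prod_{C\subset B}W(X\cup C)$ if $X\cap B=\varnothing$, $W(X\mid B)=0$ if $X=\{y\}$ with $y\in B$, and $W(X\mid B)=1$ otherwise. A maximum $\max\{a,\ b_S\mid S\in\mathcal S\}$ denotes the maximum of $a$ together with all $b_S$, $S\in\mathcal S$ (it equals $a$ if $\mathcal S=\varnothing$). *)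

theory Defs
  imports Complex_Main "HOL-Library.Countable"
begin

definition alpha :: "('a \<Rightarrow> real) \<Rightarrow> 'a \<Rightarrow> real" where
  "alpha r s = r s / (1 - r s)"

definition alphaS :: "('a \<Rightarrow> real) \<Rightarrow> 'a set \<Rightarrow> real" where
  "alphaS r S = (\<Prod>s\<in>S. alpha r s)"

definition condW :: "('a set \<Rightarrow> complex) \<Rightarrow> 'a set \<Rightarrow> 'a set \<Rightarrow> complex" where
  "condW W X B =
     (if X \<inter> B = {} then (\<Prod>C\<in>Pow B. W (X \<union> C))
      else if (\<exists>y\<in>B. X = {y}) then 0 else 1)"

definition bigmax :: "real \<Rightarrow> ('b \<Rightarrow> real) \<Rightarrow> 'b set \<Rightarrow> real" where
  "bigmax a b SS = Max (insert a (b ` SS))"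

end

theory Submission
  imports Defs
begin

text \<open>The quantity \<open>max {|w|, 1 + |w - 1| a\<^sub>S | S \<in> SS}\<close> is submultiplicative whenever all
  weights \<open>a\<^sub>S\<close> are nonnegative, because \<open>wz - 1 = (z - 1) + (w - 1) z\<close>. Hence it is bounded on a
  finite product by the product of its values on the factors. The conditional interaction
  \<open>W(Y | B)\<close> is the product of the \<open>W(Y \<union> C)\<close> over \<open>C \<subseteq> B\<close>; these sets \<open>Y \<union> C\<close> are exactly the
  \<open>X \<in> \<^bold>F(x)\<close> with \<open>X \<setminus> B = Y\<close>, and for each of them \<open>X \<setminus> ({x} \<union> B) = Y \<setminus> {x}\<close>, so both sides
  are maxima over the same family of sets \<open>S\<close>.\<close>

lemma bigmax_upper:
  "finite SS \<Longrightarrow> a \<le> bigmax a b SS"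
  "finite SS \<Longrightarrow> S \<in> SS \<Longrightarrow> b S \<le> bigmax a b SS"
  unfolding bigmax_def by (auto intro: Max_ge)

lemma bigmax_least:
  "finite SS \<Longrightarrow> a \<le> c \<Longrightarrow> (\<And>S. S \<in> SS \<Longrightarrow> b S \<le> c) \<Longrightarrow> bigmax a b SS \<le> c"
  unfolding bigmax_def by (auto intro: Max.boundedI)

definition bigmax_norm :: "('b \<Rightarrow> real) \<Rightarrow> 'b set \<Rightarrow> 'c::real_normed_algebra_1 \<Rightarrow> real" where
  "bigmax_norm a SS w = bigmax (norm w) (\<lambda>S. 1 + norm (w - 1) * a S) SS"

lemma bigmax_norm_one: "finite SS \<Longrightarrow> bigmax_norm a SS 1 = 1"
  unfolding bigmax_norm_def
  by (intro antisym bigmax_least) (auto intro: bigmax_upper)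

lemma norm_le_bigmax_norm: "finite SS \<Longrightarrow> norm w \<le> bigmax_norm a SS w"
  unfolding bigmax_norm_def by (rule bigmax_upper)

lemma dev_le_bigmax_norm:
  "finite SS \<Longrightarrow> S \<in> SS \<Longrightarrow> 1 + norm (w - 1) * a S \<le> bigmax_norm a SS w"
  unfolding bigmax_norm_def by (rule bigmax_upper)

lemma bigmax_norm_nonneg: "finite SS \<Longrightarrow> 0 \<le> bigmax_norm a SS w"
  using norm_le_bigmax_norm norm_ge_zero order_trans by blast

lemma norm_mult_minus_one_le:
  fixes w z :: "'c::real_normed_algebra_1"
  shows "norm (w * z - 1) \<le> norm (z - 1) + norm (w - 1) * norm z"
proof -
  have "w * z - 1 = (z - 1) + (w - 1) * z" by (simp add: algebra_simps)
  then show ?thesis by (metis add_left_mono norm_mult_ineq norm_triangle_ineq order_trans)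
qed

lemma bigmax_norm_mult_le:
  fixes w z :: "'c::real_normed_algebra_1"
  assumes SS: "finite SS" and a_nonneg: "\<And>S. S \<in> SS \<Longrightarrow> 0 \<le> a S"
  shows "bigmax_norm a SS (w * z) \<le> bigmax_norm a SS w * bigmax_norm a SS z"
proof -
  let ?\<phi> = "bigmax_norm a SS"
  have \<phi>_nonneg: "0 \<le> ?\<phi> z" using SS by (rule bigmax_norm_nonneg)
  show ?thesis
    unfolding bigmax_norm_def [of a SS "w * z"]
  proof (rule bigmax_least [OF SS])
    show "norm (w * z) \<le> ?\<phi> w * ?\<phi> z"
      using norm_mult_ineq [of w z] norm_le_bigmax_norm [OF SS] \<phi>_nonneg
      by (meson mult_mono norm_ge_zero order_trans)
  next
    fix S assume "S \<in> SS"
    have aS: "0 \<le> a S" using \<open>S \<in> SS\<close> by (rule a_nonneg)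
    have "1 + norm (w * z - 1) * a S \<le> 1 + norm (z - 1) * a S + norm (w - 1) * a S * norm z"
      using mult_right_mono [OF norm_mult_minus_one_le aS] by (simp add: algebra_simps)
    also have "\<dots> \<le> ?\<phi> z + norm (w - 1) * a S * ?\<phi> z"
      using dev_le_bigmax_norm [OF SS \<open>S \<in> SS\<close>] norm_le_bigmax_norm [OF SS] aS
      by (intro add_mono mult_left_mono) auto
    also have "\<dots> = (1 + norm (w - 1) * a S) * ?\<phi> z" by (simp add: algebra_simps)
    also have "\<dots> \<le> ?\<phi> w * ?\<phi> z"
      using dev_le_bigmax_norm [OF SS \<open>S \<in> SS\<close>] \<phi>_nonneg by (rule mult_right_mono)
    finally show "1 + norm (w * z - 1) * a S \<le> ?\<phi> w * ?\<phi> z" .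
  qed
qed

lemma bigmax_norm_prod_le:
  fixes w :: "'i \<Rightarrow> 'c::{real_normed_algebra_1, comm_ring_1}"
  assumes "finite I" and SS: "finite SS" and a_nonneg: "\<And>S. S \<in> SS \<Longrightarrow> 0 \<le> a S"
  shows "bigmax_norm a SS (\<Prod>i\<in>I. w i) \<le> (\<Prod>i\<in>I. bigmax_norm a SS (w i))"
  using \<open>finite I\<close>
proof (induction I rule: finite_induct)
  case empty
  show ?case using SS by (simp add: bigmax_norm_one)
next
  case (insert j I)
  have "bigmax_norm a SS (\<Prod>i\<in>insert j I. w i) \<le>
      bigmax_norm a SS (w j) * bigmax_norm a SS (\<Prod>i\<in>I. w i)"
    using insert.hyps bigmax_norm_mult_le [OF SS a_nonneg] by simp
  also have "\<dots> \<le> bigmax_norm a SS (w j) * (\<Prod>i\<in>I. bigmax_norm a SS (w i))"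
    using insert.IH bigmax_norm_nonneg [OF SS] by (rule mult_left_mono)
  finally show ?case using insert.hyps by simp
qed

lemma alphaS_nonneg:
  assumes "\<forall>s. 0 \<le> r s \<and> r s < 1"
  shows "0 \<le> alphaS r S"
  unfolding alphaS_def alpha_def
  by (rule prod_nonneg) (use assms in \<open>auto intro: divide_nonneg_pos\<close>)

lemma finite_sets_diff_eq_image_Pow:
  assumes "finite Y" "finite B" "Y \<inter> B = {}"
  shows "{X. finite X \<and> X - B = Y} = (\<lambda>C. Y \<union> C) ` Pow B"
proof (intro equalityI subsetI)
  fix X assume "X \<in> {X. finite X \<and> X - B = Y}"
  then have "X = Y \<union> (X \<inter> B)" by auto
  then show "X \<in> (\<lambda>C. Y \<union> C) ` Pow B" by blast
qed (use assms in \<open>auto intro: finite_subset\<close>)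

theorem lemma4p6:
  fixes W :: "'a::countable set \<Rightarrow> complex" and r :: "'a \<Rightarrow> real"
    and x :: 'a and B Y :: "'a set"
  assumes r_range: "\<forall>s. 0 \<le> r s \<and> r s < 1"
    and B_fin: "finite B" and x_notin_B: "x \<notin> B"
    and Y_fin: "finite Y" and x_in_Y: "x \<in> Y" and YB: "Y \<inter> B = {}"
  shows "bigmax (cmod (condW W Y B))
            (\<lambda>S. 1 + cmod (condW W Y B - 1) * alphaS r S)
            {S. S \<noteq> {} \<and> S \<subseteq> Y - {x}}
         \<le> (\<Prod>X\<in>{X. finite X \<and> x \<in> X \<and> X - B = Y}.
              bigmax (cmod (W X))
                (\<lambda>S. 1 + cmod (W X - 1) * alphaS r S)
                {S. S \<noteq> {} \<and> S \<subseteq> X - ({x} \<union> B)})"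
proof -
  define SS where "SS = {S. S \<noteq> {} \<and> S \<subseteq> Y - {x}}"
  have SS_fin: "finite SS"
    unfolding SS_def using Y_fin by (auto intro: finite_subset [of _ "Pow (Y - {x})"])
  have X_range: "{X. finite X \<and> x \<in> X \<and> X - B = Y} = (\<lambda>C. Y \<union> C) ` Pow B"
    using finite_sets_diff_eq_image_Pow [OF Y_fin B_fin YB] x_in_Y by blast
  have inj: "inj_on (\<lambda>C. Y \<union> C) (Pow B)"
    using YB by (auto simp: inj_on_def)
  have same_SS: "{S. S \<noteq> {} \<and> S \<subseteq> (Y \<union> C) - ({x} \<union> B)} = SS" if "C \<in> Pow B" for C
    using that YB unfolding SS_def by auto
  have "bigmax_norm (alphaS r) SS (condW W Y B)
      \<le> (\<Prod>C\<in>Pow B. bigmax_norm (alphaS r) SS (W (Y \<union> C)))"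
    unfolding condW_def using YB B_fin SS_fin alphaS_nonneg [OF r_range]
    by (simp add: bigmax_norm_prod_le)
  also have "\<dots> = (\<Prod>X\<in>{X. finite X \<and> x \<in> X \<and> X - B = Y}.
              bigmax_norm (alphaS r) {S. S \<noteq> {} \<and> S \<subseteq> X - ({x} \<union> B)} (W X))"
    unfolding X_range prod.reindex [OF inj] comp_def using same_SS by (intro prod.cong) auto
  finally show ?thesis unfolding bigmax_norm_def SS_def by simp
qed

end
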